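(* Let $n,k,r\in\mathbb{N}$ with $n\ge 2k\ge 2r$. For any harmonic multilinear polynomial $P\in\mathbb{R}[x_1,\ldots,x_n]$, \[ \|P^{=r}\|^2\le 4^r\binom{k}{r}\,(W^r(P))^2. \]
   Context: A multilinear polynomial $P\in\mathbb{R}[x_1,\ldots,x_n]$ is harmonic if $\sum_{i=1}^n\partial P/\partial x_i=0$. $P^{=r}$ denotes the homogeneous degree-$r$ component of $P$. $\operatorname{Slice}(n,k)\subseteq\{0,1\}^n$ is the set of vectors with exactly $k$ ones; for functions $f,g$ on it, $\langle f,g\rangle=\mathbb{E}_{\sigma\sim\operatorname{Slice}(n,k)}[f(\sigma)g(\sigma)]$ (uniform measure) and $\|f\|=\sqrt{\langle f,f\rangle}$; polynomials are viewed as functions on $\operatorname{Slice}(n,k)$. $\operatorname{Slice}(n,k)$ is identified with $\binom{[n]}{k}$ via $\sigma\mapsto\{i:\sigma_i=1\}$, so $P$ defines a function on $\binom{[n]}{k}$. For $f\colon\binom{[n]}{k}\to\mathbb{R}$ and $r\le k$ with $n\ge 2k$, the level-$r$ weight is \[ W^r(f)=\left(\mathbb{E}_{(a_1,b_1,\ldots,a_r,b_r)}\Big(\mathbb{E}_{R}\,(-1)^{|R\cap\{b_1,\ldots,b_r\}|}f(R)\Big)^2\right)^{1/2}, \] where $(a_1,b_1,\ldots,a_r,b_r)$ is a uniformly random sequence of $2r$ distinct elements of $[n]$, and, given it, $R$ is a uniformly random $k$-subset of $[n]$ with $|R\cap\{a_i,b_i\}|=1$ for each $i\in[r]$. *)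

theory Defs
  imports Complex_Main
begin

text \<open>A multilinear polynomial in x_0,...,x_{n-1} is represented by its coefficient
  function c :: nat set => real; only the coefficients c S with S a subset of {..<n} matter:
  P(x) = sum over S subset of {..<n} of c S * prod_{i in S} x_i.\<close>

definition mlpoly_eval :: "nat \<Rightarrow> (nat set \<Rightarrow> real) \<Rightarrow> (nat \<Rightarrow> real) \<Rightarrow> real" where
  "mlpoly_eval n c x = (\<Sum>S\<in>Pow {..<n}. c S * (\<Prod>i\<in>S. x i))"

definition mlpoly_deriv :: "nat \<Rightarrow> (nat set \<Rightarrow> real) \<Rightarrow> (nat set \<Rightarrow> real)" where
  "mlpoly_deriv i c = (\<lambda>T. if i \<notin> T then c (insert i T) else 0)"

definition harmonic :: "nat \<Rightarrow> (nat set \<Rightarrow> real) \<Rightarrow> bool" where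
  "harmonic n c \<longleftrightarrow> (\<forall>T\<in>Pow {..<n}. (\<Sum>i<n. mlpoly_deriv i c T) = 0)"

definition hom_part :: "nat \<Rightarrow> (nat set \<Rightarrow> real) \<Rightarrow> (nat set \<Rightarrow> real)" where
  "hom_part r c = (\<lambda>S. if card S = r then c S else 0)"

definition slice :: "nat \<Rightarrow> nat \<Rightarrow> nat set set" where
  "slice n k = {R. R \<subseteq> {..<n} \<and> card R = k}"

definition poly_on_slice :: "nat \<Rightarrow> (nat set \<Rightarrow> real) \<Rightarrow> nat set \<Rightarrow> real" where
  "poly_on_slice n c R = mlpoly_eval n c (\<lambda>i. if i \<in> R then 1 else 0)"

definition slice_norm_sq :: "nat \<Rightarrow> nat \<Rightarrow> (nat set \<Rightarrow> real) \<Rightarrow> real" where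
  "slice_norm_sq n k f = (\<Sum>R\<in>slice n k. (f R)\<^sup>2) / real (card (slice n k))"

text \<open>Sequences (a_1,b_1,...,a_r,b_r) of 2r distinct elements of {..<n}, as lists;
  a_i = xs!(2i), b_i = xs!(2i+1) for i < r.\<close>
definition pair_seqs :: "nat \<Rightarrow> nat \<Rightarrow> nat list set" where
  "pair_seqs n r = {xs. length xs = 2 * r \<and> distinct xs \<and> set xs \<subseteq> {..<n}}"

definition compatible_sets :: "nat \<Rightarrow> nat \<Rightarrow> nat \<Rightarrow> nat list \<Rightarrow> nat set set" where
  "compatible_sets n k r xs =
     {R \<in> slice n k. \<forall>i<r. card (R \<inter> {xs ! (2*i), xs ! (2*i+1)}) = 1}"

definition level_weight :: "nat \<Rightarrow> nat \<Rightarrow> nat \<Rightarrow> (nat set \<Rightarrow> real) \<Rightarrow> real" where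
  "level_weight n k r f =
     sqrt ((\<Sum>xs\<in>pair_seqs n r.
        ((\<Sum>R\<in>compatible_sets n k r xs.
            (-1) ^ card (R \<inter> {xs ! (2*i+1) | i. i < r}) * f R)
          / real (card (compatible_sets n k r xs)))\<^sup>2)
      / real (card (pair_seqs n r)))"

end

theory Submission
  imports Defs
begin

text \<open>
  Write f(R) = P(1_R) for a k-set R and, for distinct indices xs = [a_1, b_1, ..., a_r, b_r],
  let D(xs) be the constant term of (\<partial>_a_1 - \<partial>_b_1) ... (\<partial>_a_r - \<partial>_b_r) P. For harmonic P
  two exact identities hold. First, the sum of (-1)^|R \<inter> {b_1, ..., b_r}| f(R) over the k-sets R
  meeting every pair {a_i, b_i} exactly once is C(n - 2r, k - r) D(xs), so W^r(P)^2 is the mean of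
  D(xs)^2 / 4^r. Second, the sum of the same signs times D(xs) over all sequences xs compatible
  with a fixed R is \<kappa>(n, r) P^{=r}(1_R) for an explicit constant \<kappa>(n, r). Pairing the second
  identity with P^{=r} and exchanging the sums writes \<parallel>P^{=r}\<parallel>^2 as another multiple of
  \<Sum>_xs D(xs)^2, and the theorem reduces to an inequality between the two constants.
  Both identities are proved by induction on r, splitting off the first pair; harmonicity enters
  through the vanishing of \<Sum>_{|S| = w} c_S for w > 0 and of \<Sum>_{i \<notin> T} c_{T \<union> {i}}.
\<close>

section \<open>Subsets of fixed size\<close>

definition ksubsets :: "'a set \<Rightarrow> nat \<Rightarrow> 'a set set" where
  "ksubsets A k = {B. B \<subseteq> A \<and> card B = k}"

lemma finite_ksubsets [simp]: "finite A \<Longrightarrow> finite (ksubsets A k)"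
  unfolding ksubsets_def by (rule finite_subset[of _ "Pow A"]) auto

lemma card_ksubsets: "finite A \<Longrightarrow> card (ksubsets A k) = card A choose k"
  unfolding ksubsets_def by (rule n_subsets)

lemma ksubsets_0: "finite A \<Longrightarrow> ksubsets A 0 = {{}}"
  by (auto simp: ksubsets_def finite_subset)

lemma card_ksubsets_supset:
  assumes "finite X" "S \<subseteq> X" "card S \<le> k"
  shows "card {R \<in> ksubsets X k. S \<subseteq> R} = (card X - card S) choose (k - card S)"
proof -
  have "finite S" using assms finite_subset by blast
  have "bij_betw (\<lambda>R. R - S) {R \<in> ksubsets X k. S \<subseteq> R} (ksubsets (X - S) (k - card S))"
  proof (rule bij_betw_byWitness[where f' = "\<lambda>T. T \<union> S"])
    show "(\<lambda>T. T \<union> S) ` ksubsets (X - S) (k - card S) \<subseteq> {R \<in> ksubsets X k. S \<subseteq> R}"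
    proof (rule image_subsetI)
      fix T assume T: "T \<in> ksubsets (X - S) (k - card S)"
      then have "card (T \<union> S) = card T + card S"
        using assms(1) \<open>finite S\<close> by (intro card_Un_disjoint) (auto simp: ksubsets_def finite_subset)
      then show "T \<union> S \<in> {R \<in> ksubsets X k. S \<subseteq> R}"
        using T assms by (auto simp: ksubsets_def)
    qed
  qed (use assms in \<open>auto simp: ksubsets_def card_Diff_subset finite_subset\<close>)
  then have "card {R \<in> ksubsets X k. S \<subseteq> R} = card (ksubsets (X - S) (k - card S))"
    by (rule bij_betw_same_card)
  then show ?thesis
    using assms \<open>finite S\<close> by (simp add: card_ksubsets card_Diff_subset)
qed

lemma sum_insert_ksubsets:
  assumes "finite R"
  shows "(\<Sum>T\<in>ksubsets R w. \<Sum>i\<in>R - T. h (insert i T))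
           = real (Suc w) * (\<Sum>S\<in>ksubsets R (Suc w). h S)"
proof -
  have "(\<Sum>T\<in>ksubsets R w. \<Sum>i\<in>R - T. h (insert i T))
      = (\<Sum>(T, i)\<in>(SIGMA T:ksubsets R w. R - T). h (insert i T))"
    by (rule sum.Sigma) (use assms in auto)
  also have "\<dots> = (\<Sum>(S, i)\<in>(SIGMA S:ksubsets R (Suc w). S). h S)"
    by (rule sum.reindex_bij_witness[where j = "\<lambda>(T, i). (insert i T, i)" and i = "\<lambda>(S, i). (S - {i}, i)"])
       (use assms in \<open>auto simp: ksubsets_def finite_subset card_insert_if\<close>)
  also have "\<dots> = (\<Sum>S\<in>ksubsets R (Suc w). \<Sum>i\<in>S. h S)"
    by (rule sum.Sigma[symmetric]) (use assms in \<open>auto simp: ksubsets_def finite_subset\<close>)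
  also have "\<dots> = (\<Sum>S\<in>ksubsets R (Suc w). real (Suc w) * h S)"
    by (rule sum.cong) (auto simp: ksubsets_def)
  finally show ?thesis by (simp add: sum_distrib_left)
qed

lemma sum_ksubsets_Diff_swap:
  assumes "finite R"
  shows "(\<Sum>u\<in>R. \<Sum>T\<in>ksubsets (R - {u}) w. g u T) = (\<Sum>T\<in>ksubsets R w. \<Sum>u\<in>R - T. g u T)"
proof -
  have "(\<Sum>u\<in>R. \<Sum>T\<in>ksubsets (R - {u}) w. g u T) = (\<Sum>u\<in>R. \<Sum>T\<in>{T \<in> ksubsets R w. u \<notin> T}. g u T)"
    by (intro sum.cong) (auto simp: ksubsets_def)
  also have "\<dots> = (\<Sum>T\<in>ksubsets R w. \<Sum>u\<in>{u \<in> R. u \<notin> T}. g u T)"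
    by (rule sum.swap_restrict) (use assms in auto)
  finally show ?thesis by (simp add: set_diff_eq)
qed

lemma sum_offdiag_across_cut:
  fixes P :: "'a \<Rightarrow> 'a \<Rightarrow> real"
  assumes "finite X" "R \<subseteq> X"
  shows "(\<Sum>a\<in>X. \<Sum>b\<in>X - {a}. (if a \<in> R \<and> b \<notin> R then P a b else 0)
                              + (if b \<in> R \<and> a \<notin> R then P b a else 0))
           = 2 * (\<Sum>u\<in>R. \<Sum>v\<in>X - R. P u v)"
proof -
  define g where "g a b = (if a \<in> R \<and> b \<notin> R then P a b else 0)" for a b
  have sets: "{a \<in> X. a \<in> R} = R" "{b \<in> X. b \<notin> R} = X - R" using assms(2) by auto
  have "(\<Sum>b\<in>X. g a b) = (if a \<in> R then \<Sum>v\<in>{b \<in> X. b \<notin> R}. P a v else 0)" for a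
    using assms(1) by (simp add: g_def sum.inter_filter)
  then have "(\<Sum>a\<in>X. \<Sum>b\<in>X. g a b) = (\<Sum>a\<in>X. if a \<in> R then \<Sum>v\<in>{b \<in> X. b \<notin> R}. P a v else 0)"
    by simp
  also have "\<dots> = (\<Sum>u\<in>{a \<in> X. a \<in> R}. \<Sum>v\<in>{b \<in> X. b \<notin> R}. P u v)"
    by (rule sum.inter_filter[symmetric]) (use assms(1) in simp)
  finally have cut: "(\<Sum>a\<in>X. \<Sum>b\<in>X. g a b) = (\<Sum>u\<in>R. \<Sum>v\<in>X - R. P u v)"
    by (simp only: sets)
  have "(\<Sum>b\<in>X - {a}. g a b + g b a) = (\<Sum>b\<in>X. g a b + g b a)" for a
    by (rule sum.mono_neutral_left) (use assms(1) in \<open>auto simp: g_def\<close>)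
  then have "(\<Sum>a\<in>X. \<Sum>b\<in>X - {a}. g a b + g b a) = (\<Sum>a\<in>X. \<Sum>b\<in>X. g a b + g b a)"
    by simp
  also have "\<dots> = (\<Sum>a\<in>X. \<Sum>b\<in>X. g a b) + (\<Sum>b\<in>X. \<Sum>a\<in>X. g a b)"
    by (simp add: sum.distrib sum.swap[of "\<lambda>a b. g b a"])
  also have "(\<Sum>b\<in>X. \<Sum>a\<in>X. g a b) = (\<Sum>a\<in>X. \<Sum>b\<in>X. g a b)"
    by (rule sum.swap[symmetric])
  finally show ?thesis using cut unfolding g_def by simp
qed

lemma sum_Pow_insert:
  assumes "finite R" "a \<notin> R"
  shows "(\<Sum>S\<in>Pow (insert a R). f S) = (\<Sum>S\<in>Pow R. f S) + (\<Sum>S\<in>Pow R. f (insert a S))"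
proof -
  have "inj_on (insert a) (Pow R)"
    using assms(2) by (intro inj_onI) (metis Diff_insert_absorb PowD subset_iff)
  moreover have "Pow R \<inter> insert a ` Pow R = {}" using assms(2) by auto
  ultimately show ?thesis
    unfolding Pow_insert using assms(1) by (simp add: sum.union_disjoint sum.reindex)
qed

lemma card_Int_doubleton_eq_1: "a \<noteq> b \<Longrightarrow> card (R \<inter> {a, b}) = 1 \<longleftrightarrow> (a \<in> R \<longleftrightarrow> b \<notin> R)"
  by (cases "a \<in> R"; cases "b \<in> R") (auto simp: Int_insert_right)

section \<open>Harmonic coefficient functions\<close>

text \<open>For T \<subseteq> X, the sum below is the coefficient of x^T in \<Sum>_{i \<in> X} \<partial>P/\<partial>x_i.\<close>
definition harmonic_on :: "'a set \<Rightarrow> ('a set \<Rightarrow> real) \<Rightarrow> bool" where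
  "harmonic_on X c \<longleftrightarrow> (\<forall>T\<subseteq>X. (\<Sum>i\<in>X - T. c (insert i T)) = 0)"

lemma harmonic_on_sum_ksubsets:
  assumes "finite X" "harmonic_on X c"
  shows "(\<Sum>S\<in>ksubsets X (Suc w). c S) = 0"
proof -
  have "(\<Sum>T\<in>ksubsets X w. \<Sum>i\<in>X - T. c (insert i T)) = 0"
    using assms(2) by (auto simp: harmonic_on_def ksubsets_def intro!: sum.neutral)
  with sum_insert_ksubsets[OF assms(1)] show ?thesis by simp
qed

lemma harmonic_on_sum_outside:
  assumes "finite X" "harmonic_on X c" "T \<subseteq> R" "R \<subseteq> X"
  shows "(\<Sum>v\<in>X - R. c (insert v T)) = - (\<Sum>i\<in>R - T. c (insert i T))"
proof -
  have split: "X - T = (X - R) \<union> (R - T)" using assms by auto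
  have "(\<Sum>i\<in>X - T. c (insert i T)) = (\<Sum>v\<in>X - R. c (insert v T)) + (\<Sum>i\<in>R - T. c (insert i T))"
    unfolding split by (rule sum.union_disjoint) (use assms(1,4) in \<open>auto intro: finite_subset\<close>)
  moreover have "(\<Sum>i\<in>X - T. c (insert i T)) = 0"
    using assms by (auto simp: harmonic_on_def)
  ultimately show ?thesis by simp
qed

lemma harmonic_on_hom_part:
  assumes "finite X" "harmonic_on X c"
  shows "harmonic_on X (hom_part r c)"
proof (unfold harmonic_on_def, intro allI impI)
  fix T assume "T \<subseteq> X"
  then have "finite T" using assms(1) finite_subset by blast
  then have "(\<Sum>i\<in>X - T. hom_part r c (insert i T)) = (if Suc (card T) = r then \<Sum>i\<in>X - T. c (insert i T) else 0)"
    by (auto simp: hom_part_def intro!: sum.cong)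
  then show "(\<Sum>i\<in>X - T. hom_part r c (insert i T)) = 0"
    using assms(2) \<open>T \<subseteq> X\<close> by (simp add: harmonic_on_def)
qed

text \<open>ind_eval c R and hom_eval w c R are P(1_R) and P^{=w}(1_R), where P has coefficient
  function c and 1_R is the indicator vector of R.\<close>
definition ind_eval :: "('a set \<Rightarrow> real) \<Rightarrow> 'a set \<Rightarrow> real" where
  "ind_eval c R = (\<Sum>S\<in>Pow R. c S)"

definition hom_eval :: "nat \<Rightarrow> ('a set \<Rightarrow> real) \<Rightarrow> 'a set \<Rightarrow> real" where
  "hom_eval w c R = (\<Sum>S\<in>ksubsets R w. c S)"

lemma ind_eval_hom_part:
  assumes "finite R"
  shows "ind_eval (hom_part r c) R = hom_eval r c R"
proof -
  have "ind_eval (hom_part r c) R = (\<Sum>S\<in>{S \<in> Pow R. card S = r}. c S)"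
    unfolding ind_eval_def hom_part_def by (rule sum.inter_filter[symmetric]) (use assms in simp)
  also have "{S \<in> Pow R. card S = r} = ksubsets R r" by (auto simp: ksubsets_def)
  finally show ?thesis by (simp add: hom_eval_def)
qed

lemma ind_eval_eq_sum_hom_eval:
  assumes "finite R"
  shows "ind_eval c R = (\<Sum>w\<le>card R. hom_eval w c R)"
proof -
  have "(\<Sum>w\<le>card R. hom_eval w c R) = (\<Sum>w\<le>card R. \<Sum>S\<in>{S \<in> Pow R. card S = w}. c S)"
    by (intro sum.cong) (auto simp: hom_eval_def ksubsets_def)
  also have "\<dots> = ind_eval c R"
    unfolding ind_eval_def by (rule sum.group) (use assms in \<open>auto intro: card_mono\<close>)
  finally show ?thesis ..
qed

lemma sum_ksubsets_hom_eval:
  assumes "finite X" "w \<le> k"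
  shows "(\<Sum>R\<in>ksubsets X k. hom_eval w c R)
           = real ((card X - w) choose (k - w)) * (\<Sum>S\<in>ksubsets X w. c S)"
proof -
  have "(\<Sum>R\<in>ksubsets X k. hom_eval w c R)
      = (\<Sum>R\<in>ksubsets X k. \<Sum>S\<in>{S \<in> ksubsets X w. S \<subseteq> R}. c S)"
    unfolding hom_eval_def by (intro sum.cong) (auto simp: ksubsets_def)
  also have "\<dots> = (\<Sum>S\<in>ksubsets X w. \<Sum>R\<in>{R \<in> ksubsets X k. S \<subseteq> R}. c S)"
    by (rule sum.swap_restrict) (use assms in auto)
  also have "\<dots> = (\<Sum>S\<in>ksubsets X w. real ((card X - w) choose (k - w)) * c S)"
  proof (intro sum.cong refl)
    fix S assume "S \<in> ksubsets X w"
    then have "S \<subseteq> X" "card S = w" by (auto simp: ksubsets_def)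
    then show "(\<Sum>R\<in>{R \<in> ksubsets X k. S \<subseteq> R}. c S) = real ((card X - w) choose (k - w)) * c S"
      using assms by (simp add: card_ksubsets_supset)
  qed
  finally show ?thesis by (simp add: sum_distrib_left)
qed

lemma sum_ksubsets_ind_eval:
  assumes "finite X" "harmonic_on X c"
  shows "(\<Sum>R\<in>ksubsets X k. ind_eval c R) = real (card X choose k) * c {}"
proof -
  have "(\<Sum>R\<in>ksubsets X k. ind_eval c R) = (\<Sum>R\<in>ksubsets X k. \<Sum>w\<le>k. hom_eval w c R)"
    using assms(1) by (intro sum.cong) (auto simp: ksubsets_def ind_eval_eq_sum_hom_eval finite_subset)
  also have "\<dots> = (\<Sum>w\<le>k. \<Sum>R\<in>ksubsets X k. hom_eval w c R)"
    by (rule sum.swap)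
  also have "\<dots> = (\<Sum>w\<le>k. if w = 0 then real (card X choose k) * c {} else 0)"
  proof (intro sum.cong refl)
    fix w assume "w \<in> {..k}"
    then show "(\<Sum>R\<in>ksubsets X k. hom_eval w c R) = (if w = 0 then real (card X choose k) * c {} else 0)"
      using assms by (cases w) (auto simp: sum_ksubsets_hom_eval ksubsets_0 harmonic_on_sum_ksubsets)
  qed
  finally show ?thesis by simp
qed

section \<open>Differences along pairs\<close>

text \<open>On sets avoiding a and b, pair_diff a b c is the coefficient function of
  (\<partial>_a - \<partial>_b) P, where \<partial>_i = \<partial>/\<partial>x_i.\<close>
definition pair_diff :: "'a \<Rightarrow> 'a \<Rightarrow> ('a set \<Rightarrow> real) \<Rightarrow> 'a set \<Rightarrow> real" where
  "pair_diff a b c T = c (insert a T) - c (insert b T)"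

lemma ind_eval_insert_pair_diff:
  assumes "finite R" "a \<notin> R" "b \<notin> R"
  shows "ind_eval c (insert a R) - ind_eval c (insert b R) = ind_eval (pair_diff a b c) R"
  using assms by (simp add: ind_eval_def pair_diff_def sum_Pow_insert sum_subtractf)

lemma harmonic_on_pair_diff:
  assumes "finite X" "harmonic_on X c" "a \<in> X" "b \<in> X" "a \<noteq> b"
  shows "harmonic_on (X - {a, b}) (pair_diff a b c)"
proof (unfold harmonic_on_def, intro allI impI)
  fix T assume T: "T \<subseteq> X - {a, b}"
  let ?R = "insert a (insert b T)"
  have "?R \<subseteq> X" "X - {a, b} - T = X - ?R" "?R - insert a T = {b}" "?R - insert b T = {a}"
    using T assms(3-5) by auto
  then have "(\<Sum>v\<in>X - {a, b} - T. c (insert v (insert a T))) = - c (insert b (insert a T))"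
       and "(\<Sum>v\<in>X - {a, b} - T. c (insert v (insert b T))) = - c (insert a (insert b T))"
    using harmonic_on_sum_outside[OF assms(1,2), of "insert a T" ?R]
          harmonic_on_sum_outside[OF assms(1,2), of "insert b T" ?R]
    by (auto simp: insert_commute)
  then show "(\<Sum>i\<in>X - {a, b} - T. pair_diff a b c (insert i T)) = 0"
    by (simp add: pair_diff_def sum_subtractf insert_commute)
qed

text \<open>For xs = [a_1, b_1, ..., a_r, b_r] this is the constant term of
  (\<partial>_a_1 - \<partial>_b_1) ... (\<partial>_a_r - \<partial>_b_r) P.\<close>
fun iter_pair_diff :: "('a set \<Rightarrow> real) \<Rightarrow> 'a list \<Rightarrow> real" where
  "iter_pair_diff c (a # b # ys) = iter_pair_diff (pair_diff a b c) ys"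
| "iter_pair_diff c _ = c {}"

lemma iter_pair_diff_uminus: "iter_pair_diff (\<lambda>T. - c T) ys = - iter_pair_diff c ys"
proof (induction c ys rule: iter_pair_diff.induct)
  case (1 c a b ys)
  have "pair_diff a b (\<lambda>T. - c T) = (\<lambda>T. - pair_diff a b c T)" by (auto simp: pair_diff_def)
  with 1 show ?case by simp
qed simp_all

lemma iter_pair_diff_swap: "iter_pair_diff (pair_diff b a c) ys = - iter_pair_diff (pair_diff a b c) ys"
proof -
  have "pair_diff b a c = (\<lambda>T. - pair_diff a b c T)" by (auto simp: pair_diff_def)
  then show ?thesis by (simp add: iter_pair_diff_uminus)
qed

lemma iter_pair_diff_cong:
  "(\<And>T. T \<subseteq> set xs \<Longrightarrow> c T = c' T) \<Longrightarrow> iter_pair_diff c xs = iter_pair_diff c' xs"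
proof (induction c xs arbitrary: c' rule: iter_pair_diff.induct)
  case (1 c a b ys)
  have "iter_pair_diff (pair_diff a b c) ys = iter_pair_diff (pair_diff a b c') ys"
  proof (rule "1.IH")
    fix T assume "T \<subseteq> set ys"
    then have "insert a T \<subseteq> set (a # b # ys)" "insert b T \<subseteq> set (a # b # ys)" by auto
    then show "pair_diff a b c T = pair_diff a b c' T"
      using "1.prems" by (simp add: pair_diff_def)
  qed
  then show ?case by simp
qed simp_all

lemma iter_pair_diff_hom_part:
  "length xs = 2 * r \<Longrightarrow> distinct xs \<Longrightarrow> iter_pair_diff (hom_part r c) xs = iter_pair_diff c xs"
proof (induction r arbitrary: c xs)
  case 0
  then show ?case by (simp add: hom_part_def)
next
  case (Suc r)
  then obtain a b ys where xs: "xs = a # b # ys" "length ys = 2 * r" "distinct ys" "a \<notin> set ys" "b \<notin> set ys"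
    by (cases xs rule: remdups_adj.cases) auto
  have "iter_pair_diff (pair_diff a b (hom_part (Suc r) c)) ys = iter_pair_diff (hom_part r (pair_diff a b c)) ys"
  proof (rule iter_pair_diff_cong)
    fix T assume "T \<subseteq> set ys"
    then have "finite T" "a \<notin> T" "b \<notin> T" using xs finite_subset by auto
    then show "pair_diff a b (hom_part (Suc r) c) T = hom_part r (pair_diff a b c) T"
      by (simp add: pair_diff_def hom_part_def)
  qed
  also have "\<dots> = iter_pair_diff (pair_diff a b c) ys" using Suc.IH xs by blast
  finally show ?case using xs by simp
qed

section \<open>Pair sequences and compatible sets\<close>

fun splits_pairs :: "'a list \<Rightarrow> 'a set \<Rightarrow> bool" where
  "splits_pairs (a # b # ys) R \<longleftrightarrow> card (R \<inter> {a, b}) = 1 \<and> splits_pairs ys R"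
| "splits_pairs _ R \<longleftrightarrow> True"

fun pair_seconds :: "'a list \<Rightarrow> 'a set" where
  "pair_seconds (a # b # ys) = insert b (pair_seconds ys)"
| "pair_seconds _ = {}"

definition pair_sign :: "'a list \<Rightarrow> 'a set \<Rightarrow> real" where
  "pair_sign xs R = (-1) ^ card (R \<inter> pair_seconds xs)"

definition pair_seqs_on :: "'a set \<Rightarrow> nat \<Rightarrow> 'a list set" where
  "pair_seqs_on X r = {xs. length xs = 2 * r \<and> distinct xs \<and> set xs \<subseteq> X}"

definition compatible_on :: "'a set \<Rightarrow> nat \<Rightarrow> 'a list \<Rightarrow> 'a set set" where
  "compatible_on X k xs = {R \<in> ksubsets X k. splits_pairs xs R}"

lemma pair_seconds_subset: "pair_seconds xs \<subseteq> set xs"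
  by (induction xs rule: pair_seconds.induct) auto

lemma splits_pairs_cong: "R \<inter> set ys = R' \<inter> set ys \<Longrightarrow> splits_pairs ys R = splits_pairs ys R'"
proof (induction ys R rule: splits_pairs.induct)
  case (1 a b ys R)
  then have "R \<inter> {a, b} = R' \<inter> {a, b}" "R \<inter> set ys = R' \<inter> set ys" by auto
  with "1.IH" show ?case by simp
qed simp_all

lemma pair_sign_insert_first:
  assumes "a \<notin> set ys" "a \<noteq> b" "b \<notin> R"
  shows "pair_sign (a # b # ys) (insert a R) = pair_sign ys R"
proof -
  have "insert a R \<inter> insert b (pair_seconds ys) = R \<inter> pair_seconds ys"
    using assms pair_seconds_subset[of ys] by auto
  then show ?thesis by (simp add: pair_sign_def)
qed

lemma pair_sign_insert_second:
  assumes "finite R" "b \<notin> R"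
  shows "pair_sign (a # b # ys) (insert b R) = - pair_sign ys R"
proof -
  have "insert b R \<inter> insert b (pair_seconds ys) = insert b (R \<inter> pair_seconds ys)" by auto
  with assms show ?thesis by (simp add: pair_sign_def)
qed

lemma finite_pair_seqs_on [simp]: "finite X \<Longrightarrow> finite (pair_seqs_on X r)"
  unfolding pair_seqs_on_def
  by (rule finite_subset[OF _ finite_lists_length_eq[of X "2 * r"]]) auto

lemma pair_seqs_on_0 [simp]: "pair_seqs_on X 0 = {[]}"
  by (auto simp: pair_seqs_on_def)

lemma pair_seqs_on_Suc:
  "pair_seqs_on X (Suc r)
     = (\<lambda>(a, b, ys). a # b # ys) ` (SIGMA a:X. SIGMA b:X - {a}. pair_seqs_on (X - {a, b}) r)"
proof (intro equalityI subsetI)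
  fix xs assume xs: "xs \<in> pair_seqs_on X (Suc r)"
  then obtain a b ys where "xs = a # b # ys"
    by (cases xs rule: remdups_adj.cases) (auto simp: pair_seqs_on_def)
  with xs show "xs \<in> (\<lambda>(a, b, ys). a # b # ys) ` (SIGMA a:X. SIGMA b:X - {a}. pair_seqs_on (X - {a, b}) r)"
    by (auto simp: pair_seqs_on_def image_iff)
qed (auto simp: pair_seqs_on_def)

lemma pair_seqs_on_SucE:
  assumes "xs \<in> pair_seqs_on X (Suc r)"
  obtains a b ys where "xs = a # b # ys" "a \<in> X" "b \<in> X" "a \<noteq> b" "ys \<in> pair_seqs_on (X - {a, b}) r"
  using assms unfolding pair_seqs_on_Suc by auto

lemma sum_pair_seqs_on_Suc:
  assumes "finite X"
  shows "(\<Sum>xs\<in>pair_seqs_on X (Suc r). h xs)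
           = (\<Sum>a\<in>X. \<Sum>b\<in>X - {a}. \<Sum>ys\<in>pair_seqs_on (X - {a, b}) r. h (a # b # ys))"
proof -
  have "inj_on (\<lambda>(a, b, ys). a # b # ys) (SIGMA a:X. SIGMA b:X - {a}. pair_seqs_on (X - {a, b}) r)"
    by (auto simp: inj_on_def)
  then have "(\<Sum>xs\<in>pair_seqs_on X (Suc r). h xs)
      = (\<Sum>(a, b, ys)\<in>(SIGMA a:X. SIGMA b:X - {a}. pair_seqs_on (X - {a, b}) r). h (a # b # ys))"
    unfolding pair_seqs_on_Suc by (simp add: sum.reindex case_prod_unfold)
  also have "\<dots> = (\<Sum>a\<in>X. \<Sum>(b, ys)\<in>(SIGMA b:X - {a}. pair_seqs_on (X - {a, b}) r). h (a # b # ys))"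
    by (rule sum.Sigma[symmetric]) (use assms in auto)
  also have "\<dots> = (\<Sum>a\<in>X. \<Sum>b\<in>X - {a}. \<Sum>ys\<in>pair_seqs_on (X - {a, b}) r. h (a # b # ys))"
    by (intro sum.cong refl sum.Sigma[symmetric]) (use assms in auto)
  finally show ?thesis .
qed

lemma finite_compatible_on [simp]: "finite X \<Longrightarrow> finite (compatible_on X k xs)"
  by (simp add: compatible_on_def)

lemma insert_mem_compatible_on_Cons_iff:
  assumes "finite X" "u \<in> {a, b}" "a \<in> X" "b \<in> X" "a \<noteq> b" "set ys \<subseteq> X - {a, b}" "R \<subseteq> X - {a, b}"
  shows "insert u R \<in> compatible_on X (Suc k) (a # b # ys) \<longleftrightarrow> R \<in> compatible_on (X - {a, b}) k ys"
proof -
  have "finite R" using assms(1,7) finite_subset by blast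
  moreover have "u \<notin> R" "insert u R \<inter> {a, b} = {u}" "insert u R \<subseteq> X" using assms by auto
  moreover have "splits_pairs ys (insert u R) = splits_pairs ys R"
    using assms(2,6) by (intro splits_pairs_cong) auto
  ultimately show ?thesis
    using assms(7) by (simp add: compatible_on_def ksubsets_def)
qed

lemma compatible_on_Suc:
  assumes "finite X" "a \<in> X" "b \<in> X" "a \<noteq> b" "set ys \<subseteq> X - {a, b}"
  shows "compatible_on X (Suc k) (a # b # ys)
           = insert a ` compatible_on (X - {a, b}) k ys \<union> insert b ` compatible_on (X - {a, b}) k ys"
    (is "?S = insert a ` ?C \<union> insert b ` ?C")
proof (intro equalityI subsetI)
  fix R assume R: "R \<in> ?S"
  then have "R \<subseteq> X" and "card (R \<inter> {a, b}) = 1" by (auto simp: compatible_on_def ksubsets_def)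
  then have "R \<subseteq> X" "a \<in> R \<longleftrightarrow> b \<notin> R" using card_Int_doubleton_eq_1[OF assms(4)] by blast+
  then obtain u where u: "u \<in> {a, b}" "u \<in> R" "R - {u} \<subseteq> X - {a, b}" by blast
  then have "R - {u} \<in> ?C"
    using R insert_mem_compatible_on_Cons_iff[OF assms(1) u(1) assms(2-5) u(3)] by (simp add: insert_absorb)
  moreover have "R = insert u (R - {u})" using u(2) by blast
  ultimately show "R \<in> insert a ` ?C \<union> insert b ` ?C" using u(1) by blast
next
  fix R assume "R \<in> insert a ` ?C \<union> insert b ` ?C"
  then obtain u R' where "u \<in> {a, b}" "R' \<in> ?C" "R = insert u R'" by auto
  moreover have "R' \<subseteq> X - {a, b}" using \<open>R' \<in> ?C\<close> by (simp add: compatible_on_def ksubsets_def)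
  ultimately show "R \<in> ?S" using insert_mem_compatible_on_Cons_iff[OF assms(1) _ assms(2-5)] by blast
qed

lemma sum_compatible_on_Suc:
  assumes "finite X" "a \<in> X" "b \<in> X" "a \<noteq> b" "set ys \<subseteq> X - {a, b}"
  shows "(\<Sum>R\<in>compatible_on X (Suc k) (a # b # ys). h R)
           = (\<Sum>R\<in>compatible_on (X - {a, b}) k ys. h (insert a R) + h (insert b R))"
proof -
  let ?C = "compatible_on (X - {a, b}) k ys"
  have ab: "a \<notin> R" "b \<notin> R" if "R \<in> ?C" for R
    using that by (auto simp: compatible_on_def ksubsets_def)
  then have "inj_on (insert a) ?C" "inj_on (insert b) ?C"
    by (meson inj_onI insert_ident)+
  moreover have "insert a ` ?C \<inter> insert b ` ?C = {}"
    using ab assms(4) by blast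
  ultimately show ?thesis using assms(1)
    by (simp add: compatible_on_Suc[OF assms] sum.union_disjoint sum.reindex sum.distrib)
qed

lemma card_compatible_on:
  assumes "finite X" "xs \<in> pair_seqs_on X r" "r \<le> k"
  shows "card (compatible_on X k xs) = 2 ^ r * ((card X - 2 * r) choose (k - r))"
  using assms
proof (induction r arbitrary: X k xs)
  case 0
  then show ?case by (simp add: compatible_on_def card_ksubsets)
next
  case (Suc r)
  from Suc.prems(2) obtain a b ys
    where xs: "xs = a # b # ys" "a \<in> X" "b \<in> X" "a \<noteq> b" and ys: "ys \<in> pair_seqs_on (X - {a, b}) r"
    by (rule pair_seqs_on_SucE)
  obtain k' where k: "k = Suc k'" using Suc.prems(3) by (cases k) auto
  have "card (compatible_on X k xs) = (\<Sum>R\<in>compatible_on (X - {a, b}) k' ys. 1 + 1)"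
    unfolding k xs(1) card_eq_sum using ys Suc.prems(1) xs(2-4)
    by (intro sum_compatible_on_Suc) (auto simp: pair_seqs_on_def)
  also have "\<dots> = 2 * (2 ^ r * ((card (X - {a, b}) - 2 * r) choose (k' - r)))"
    using Suc.IH[of "X - {a, b}" ys k'] Suc.prems ys k by simp
  also have "card (X - {a, b}) = card X - 2" using xs Suc.prems(1) by simp
  finally show ?case using k by simp
qed

section \<open>Signed sums over compatible sets and sequences\<close>

lemma sum_compatible_on_pair_sign:
  assumes "finite X" "harmonic_on X c" "xs \<in> pair_seqs_on X r" "r \<le> k"
  shows "(\<Sum>R\<in>compatible_on X k xs. pair_sign xs R * ind_eval c R)
           = real ((card X - 2 * r) choose (k - r)) * iter_pair_diff c xs"
  using assms
proof (induction r arbitrary: X k c xs)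
  case 0
  then show ?case by (simp add: compatible_on_def pair_sign_def sum_ksubsets_ind_eval)
next
  case (Suc r)
  from Suc.prems(3) obtain a b ys
    where xs: "xs = a # b # ys" "a \<in> X" "b \<in> X" "a \<noteq> b" and ys: "ys \<in> pair_seqs_on (X - {a, b}) r"
    by (rule pair_seqs_on_SucE)
  obtain k' where k: "k = Suc k'" using Suc.prems(4) by (cases k) auto
  have ys_set: "set ys \<subseteq> X - {a, b}" using ys by (simp add: pair_seqs_on_def)
  have "(\<Sum>R\<in>compatible_on X k xs. pair_sign xs R * ind_eval c R)
      = (\<Sum>R\<in>compatible_on (X - {a, b}) k' ys.
           pair_sign xs (insert a R) * ind_eval c (insert a R) + pair_sign xs (insert b R) * ind_eval c (insert b R))"
    unfolding k xs(1) using Suc.prems(1) xs(2-4) ys_set by (rule sum_compatible_on_Suc)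
  also have "\<dots> = (\<Sum>R\<in>compatible_on (X - {a, b}) k' ys. pair_sign ys R * ind_eval (pair_diff a b c) R)"
  proof (intro sum.cong refl)
    fix R assume "R \<in> compatible_on (X - {a, b}) k' ys"
    then have "R \<subseteq> X - {a, b}" by (simp add: compatible_on_def ksubsets_def)
    then have "finite R" "a \<notin> R" "b \<notin> R" "a \<notin> set ys"
      using Suc.prems(1) ys_set by (auto intro: finite_subset)
    then show "pair_sign xs (insert a R) * ind_eval c (insert a R) + pair_sign xs (insert b R) * ind_eval c (insert b R)
        = pair_sign ys R * ind_eval (pair_diff a b c) R"
      using xs(4) unfolding xs(1)
      by (simp add: pair_sign_insert_first pair_sign_insert_second
          ind_eval_insert_pair_diff[symmetric] right_diff_distrib)
  qed
  also have "\<dots> = real ((card (X - {a, b}) - 2 * r) choose (k' - r)) * iter_pair_diff (pair_diff a b c) ys"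
    by (rule Suc.IH) (use Suc.prems k ys harmonic_on_pair_diff[OF Suc.prems(1,2) xs(2-4)] in auto)
  also have "card (X - {a, b}) = card X - 2" using xs Suc.prems(1) by simp
  finally show ?case using xs(1) k by simp
qed

definition signed_diff :: "('a set \<Rightarrow> real) \<Rightarrow> 'a list \<Rightarrow> 'a set \<Rightarrow> real" where
  "signed_diff c xs R = (if splits_pairs xs R then pair_sign xs R * iter_pair_diff c xs else 0)"

lemma signed_diff_Cons:
  assumes "finite R" "u \<in> R" "v \<notin> R" "u \<notin> set ys"
  shows "signed_diff c (u # v # ys) R = signed_diff (pair_diff u v c) ys (R - {u})"
    and "signed_diff c (v # u # ys) R = signed_diff (pair_diff u v c) ys (R - {u})"
proof -
  have "u \<noteq> v" using assms(2,3) by blast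
  then have "card (R \<inter> {u, v}) = 1" "card (R \<inter> {v, u}) = 1"
    using assms(2,3) by (simp_all add: card_Int_doubleton_eq_1 insert_commute)
  moreover have "splits_pairs ys R = splits_pairs ys (R - {u})"
    using assms(4) by (intro splits_pairs_cong) auto
  moreover have "pair_sign (u # v # ys) R = pair_sign ys (R - {u})"
    using pair_sign_insert_first[of u ys v "R - {u}"] assms \<open>u \<noteq> v\<close>
    by (simp add: insert_absorb)
  moreover have "pair_sign (v # u # ys) R = - pair_sign ys (R - {u})"
    using pair_sign_insert_second[of "R - {u}" u v ys] assms by (simp add: insert_absorb)
  ultimately show "signed_diff c (u # v # ys) R = signed_diff (pair_diff u v c) ys (R - {u})"
    and "signed_diff c (v # u # ys) R = signed_diff (pair_diff u v c) ys (R - {u})"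
    by (simp_all add: signed_diff_def iter_pair_diff_swap[where a = u and b = v])
qed

lemma signed_diff_Cons_same_side:
  assumes "u \<noteq> v" "u \<in> R \<longleftrightarrow> v \<in> R"
  shows "signed_diff c (u # v # ys) R = 0"
proof -
  have "card (R \<inter> {u, v}) \<noteq> 1" using assms(2) card_Int_doubleton_eq_1[OF assms(1), of R] by simp
  then show ?thesis by (simp add: signed_diff_def)
qed

definition compatible_diff_sum :: "'a set \<Rightarrow> nat \<Rightarrow> ('a set \<Rightarrow> real) \<Rightarrow> 'a set \<Rightarrow> real" where
  "compatible_diff_sum X r c R = (\<Sum>xs\<in>pair_seqs_on X r. signed_diff c xs R)"

lemma compatible_diff_sum_Suc:
  assumes "finite X" "R \<subseteq> X"
  shows "compatible_diff_sum X (Suc r) c R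
           = 2 * (\<Sum>u\<in>R. \<Sum>v\<in>X - R. compatible_diff_sum (X - {u, v}) r (pair_diff u v c) (R - {u}))"
proof -
  define Q where "Q u v = compatible_diff_sum (X - {u, v}) r (pair_diff u v c) (R - {u})" for u v
  have "(\<Sum>ys\<in>pair_seqs_on (X - {a, b}) r. signed_diff c (a # b # ys) R)
      = (if a \<in> R \<and> b \<notin> R then Q a b else 0) + (if b \<in> R \<and> a \<notin> R then Q b a else 0)"
    if "a \<in> X" "b \<in> X - {a}" for a b
  proof -
    have "finite R" using assms finite_subset by blast
    have ys: "a \<notin> set ys" "b \<notin> set ys" if "ys \<in> pair_seqs_on (X - {a, b}) r" for ys
      using that by (auto simp: pair_seqs_on_def)
    consider "a \<in> R" "b \<notin> R" | "b \<in> R" "a \<notin> R" | "a \<in> R \<longleftrightarrow> b \<in> R" by blast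
    then show ?thesis
    proof cases
      case 1
      then show ?thesis
        using signed_diff_Cons(1)[OF \<open>finite R\<close>, of a b] ys by (simp add: Q_def compatible_diff_sum_def)
    next
      case 2
      then show ?thesis
        using signed_diff_Cons(2)[OF \<open>finite R\<close>, of b a] ys
        by (simp add: Q_def compatible_diff_sum_def insert_commute)
    next
      case 3
      then show ?thesis using that signed_diff_Cons_same_side[of a b R] by auto
    qed
  qed
  then have "compatible_diff_sum X (Suc r) c R
      = (\<Sum>a\<in>X. \<Sum>b\<in>X - {a}. (if a \<in> R \<and> b \<notin> R then Q a b else 0) + (if b \<in> R \<and> a \<notin> R then Q b a else 0))"
    unfolding compatible_diff_sum_def sum_pair_seqs_on_Suc[OF assms(1)] by simp
  also have "\<dots> = 2 * (\<Sum>u\<in>R. \<Sum>v\<in>X - R. Q u v)"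
    by (rule sum_offdiag_across_cut[OF assms])
  finally show ?thesis by (simp add: Q_def)
qed

lemma sum_cut_hom_eval_pair_diff:
  assumes "finite X" "harmonic_on X c" "R \<subseteq> X" "card R = k" "r \<le> k"
  shows "(\<Sum>u\<in>R. \<Sum>v\<in>X - R. hom_eval r (pair_diff u v c) (R - {u}))
           = real (Suc r) * real (card X - r) * hom_eval (Suc r) c R"
proof -
  have "finite R" using assms(1,3) finite_subset by blast
  let ?H = "\<Sum>T\<in>ksubsets R r. \<Sum>i\<in>R - T. c (insert i T)"
  have inside: "(\<Sum>u\<in>R. \<Sum>T\<in>ksubsets (R - {u}) r. c (insert u T)) = ?H"
    by (rule sum_ksubsets_Diff_swap[OF \<open>finite R\<close>])
  have "(\<Sum>u\<in>R. \<Sum>T\<in>ksubsets (R - {u}) r. \<Sum>v\<in>X - R. c (insert v T))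
      = (\<Sum>T\<in>ksubsets R r. \<Sum>u\<in>R - T. \<Sum>v\<in>X - R. c (insert v T))"
    by (rule sum_ksubsets_Diff_swap[OF \<open>finite R\<close>])
  also have "\<dots> = (\<Sum>T\<in>ksubsets R r. real (k - r) * - (\<Sum>i\<in>R - T. c (insert i T)))"
  proof (intro sum.cong refl)
    fix T assume "T \<in> ksubsets R r"
    then have "T \<subseteq> R" "card (R - T) = k - r"
      using assms(4) \<open>finite R\<close> by (auto simp: ksubsets_def card_Diff_subset finite_subset)
    then show "(\<Sum>u\<in>R - T. \<Sum>v\<in>X - R. c (insert v T)) = real (k - r) * - (\<Sum>i\<in>R - T. c (insert i T))"
      using harmonic_on_sum_outside[OF assms(1,2) _ assms(3)] by simp
  qed
  finally have outside: "(\<Sum>u\<in>R. \<Sum>v\<in>X - R. \<Sum>T\<in>ksubsets (R - {u}) r. c (insert v T)) = - (real (k - r) * ?H)"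
    by (simp add: sum.swap[of _ "X - R"] sum_distrib_left sum_negf)
  have "(\<Sum>u\<in>R. \<Sum>v\<in>X - R. hom_eval r (pair_diff u v c) (R - {u}))
      = (real (card (X - R)) + real (k - r)) * ?H"
    using inside outside
    by (simp add: hom_eval_def pair_diff_def sum_subtractf sum_distrib_left[symmetric] algebra_simps)
  also have "real (card (X - R)) + real (k - r) = real (card X - r)"
    using assms \<open>finite R\<close> card_mono[OF assms(1,3)] by (simp add: card_Diff_subset)
  also have "?H = real (Suc r) * hom_eval (Suc r) c R"
    unfolding hom_eval_def by (rule sum_insert_ksubsets[OF \<open>finite R\<close>])
  finally show ?thesis by simp
qed

text \<open>The factor 2 comes from compatible_diff_sum_Suc and the factor (r + 1) (N - r) from
  sum_cut_hom_eval_pair_diff.\<close>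
fun compatible_diff_factor :: "nat \<Rightarrow> nat \<Rightarrow> real" where
  "compatible_diff_factor N 0 = 1"
| "compatible_diff_factor N (Suc r) = 2 * real (Suc r) * real (N - r) * compatible_diff_factor (N - 2) r"

lemma compatible_diff_factor_pos: "2 * r \<le> N \<Longrightarrow> compatible_diff_factor N r > 0"
  by (induction r arbitrary: N) auto

lemma compatible_diff_sum_eq_hom_eval:
  assumes "finite X" "harmonic_on X c" "R \<subseteq> X" "card R = k" "r \<le> k"
  shows "compatible_diff_sum X r c R = compatible_diff_factor (card X) r * hom_eval r c R"
  using assms
proof (induction r arbitrary: X c R k)
  case 0
  then have "finite R" using finite_subset by blast
  then show ?case by (simp add: compatible_diff_sum_def signed_diff_def pair_sign_def hom_eval_def ksubsets_0)
next
  case (Suc r)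
  have IH: "compatible_diff_sum (X - {u, v}) r (pair_diff u v c) (R - {u})
      = compatible_diff_factor (card X - 2) r * hom_eval r (pair_diff u v c) (R - {u})"
    if "u \<in> R" "v \<in> X - R" for u v
  proof -
    have uv: "u \<in> X" "u \<noteq> v" using that Suc.prems(3) by auto
    then have "card (X - {u, v}) = card X - 2" "card (R - {u}) = k - 1"
      using that Suc.prems by (auto simp: finite_subset)
    moreover have "harmonic_on (X - {u, v}) (pair_diff u v c)"
      using harmonic_on_pair_diff[OF Suc.prems(1,2)] uv that by blast
    moreover have "R - {u} \<subseteq> X - {u, v}" "r \<le> k - 1" using that Suc.prems(3,5) by auto
    ultimately show ?thesis
      using Suc.IH[of "X - {u, v}" "pair_diff u v c" "R - {u}" "k - 1"] Suc.prems(1) by simp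
  qed
  have "compatible_diff_sum X (Suc r) c R
      = 2 * compatible_diff_factor (card X - 2) r * (\<Sum>u\<in>R. \<Sum>v\<in>X - R. hom_eval r (pair_diff u v c) (R - {u}))"
    using Suc.prems(1,3) IH by (simp add: compatible_diff_sum_Suc sum_distrib_left mult.assoc)
  also have "\<dots> = compatible_diff_factor (card X) (Suc r) * hom_eval (Suc r) c R"
    using Suc.prems by (simp add: sum_cut_hom_eval_pair_diff)
  finally show ?case .
qed

lemma sum_ksubsets_signed_diff:
  assumes "finite X"
  shows "(\<Sum>R\<in>ksubsets X k. signed_diff c xs R * f R)
           = iter_pair_diff c xs * (\<Sum>R\<in>compatible_on X k xs. pair_sign xs R * f R)"
proof -
  have "(\<Sum>R\<in>ksubsets X k. signed_diff c xs R * f R)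
      = (\<Sum>R\<in>ksubsets X k. if splits_pairs xs R then iter_pair_diff c xs * (pair_sign xs R * f R) else 0)"
    by (intro sum.cong) (auto simp: signed_diff_def)
  also have "\<dots> = (\<Sum>R\<in>compatible_on X k xs. iter_pair_diff c xs * (pair_sign xs R * f R))"
    unfolding compatible_on_def by (rule sum.inter_filter[symmetric]) (use assms in simp)
  finally show ?thesis by (simp add: sum_distrib_left)
qed

lemma sum_hom_eval_sq:
  fixes c :: "nat set \<Rightarrow> real"
  assumes "finite X" "harmonic_on X c" "r \<le> k"
  shows "compatible_diff_factor (card X) r * (\<Sum>R\<in>ksubsets X k. (hom_eval r c R)\<^sup>2)
           = real ((card X - 2 * r) choose (k - r)) * (\<Sum>xs\<in>pair_seqs_on X r. (iter_pair_diff c xs)\<^sup>2)"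
proof -
  have fin: "finite R" if "R \<in> ksubsets X k" for R
    using that assms(1) by (auto simp: ksubsets_def finite_subset)
  have "compatible_diff_factor (card X) r * (\<Sum>R\<in>ksubsets X k. (hom_eval r c R)\<^sup>2)
      = (\<Sum>R\<in>ksubsets X k. compatible_diff_sum X r c R * hom_eval r c R)"
    using assms by (auto simp: sum_distrib_left power2_eq_square ksubsets_def
        compatible_diff_sum_eq_hom_eval intro!: sum.cong)
  also have "\<dots> = (\<Sum>xs\<in>pair_seqs_on X r. \<Sum>R\<in>ksubsets X k. signed_diff c xs R * hom_eval r c R)"
    unfolding compatible_diff_sum_def sum_distrib_right by (rule sum.swap)
  also have "\<dots> = (\<Sum>xs\<in>pair_seqs_on X r. iter_pair_diff c xs
                    * (\<Sum>R\<in>compatible_on X k xs. pair_sign xs R * ind_eval (hom_part r c) R))"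
    using assms(1) fin
    by (simp add: sum_ksubsets_signed_diff compatible_on_def ind_eval_hom_part)
  also have "\<dots> = (\<Sum>xs\<in>pair_seqs_on X r. iter_pair_diff c xs
                    * (real ((card X - 2 * r) choose (k - r)) * iter_pair_diff c xs))"
    using assms harmonic_on_hom_part[OF assms(1,2)]
    by (intro sum.cong refl)
       (simp add: sum_compatible_on_pair_sign iter_pair_diff_hom_part pair_seqs_on_def)
  finally show ?thesis by (simp add: sum_distrib_left sum_distrib_right power2_eq_square mult_ac)
qed

section \<open>Comparison of the constants\<close>

lemma choose_Suc_Suc_identity:
  assumes k: "k = Suc k'" and N: "N = Suc (Suc N')"
  shows "real (k' choose r) * real (N' choose k') * (real N * real (N - 1))
           = real (k choose Suc r) * real (N choose k) * (real (Suc r) * real (N - k))"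
proof -
  have e1: "(k choose Suc r) * Suc r = k * (k' choose r)"
    unfolding k by (rule Suc_times_binomial_eq[symmetric])
  have e2: "k * (N choose k) = N * (Suc N' choose k')"
    unfolding k N using Suc_times_binomial_eq[of "Suc N'" k'] by (simp only: mult.commute)
  have e3: "(N - k) * (Suc N' choose k') = (N - 1) * (N' choose k')"
    unfolding k N using binomial_absorb_comp[of "Suc N'" k'] by simp
  have "(k choose Suc r) * Suc r * ((N choose k) * (N - k))
      = (k' choose r) * ((k * (N choose k)) * (N - k))"
    by (subst e1) (simp only: mult_ac)
  also have "\<dots> = (k' choose r) * (N * ((N - k) * (Suc N' choose k')))"
    by (subst e2) (simp only: mult_ac)
  also have "\<dots> = (k' choose r) * (N' choose k') * (N * (N - 1))"
    by (subst e3) (simp only: mult_ac)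
  finally have "real ((k choose Suc r) * Suc r * ((N choose k) * (N - k)))
      = real ((k' choose r) * (N' choose k') * (N * (N - 1)))" by (rule arg_cong)
  then show ?thesis by (simp only: of_nat_mult mult_ac)
qed

lemma prod_falling_Suc:
  assumes "N = Suc (Suc N')" "2 * r \<le> N'"
  shows "\<Prod>{N - 2 * Suc r + 1..N} = N * (N - 1) * \<Prod>{N' - 2 * r + 1..N'}"
proof -
  have "N - 2 * Suc r + 1 = N' - 2 * r + 1" using assms by simp
  then show ?thesis by (simp add: assms(1) atLeastAtMostSuc_conv algebra_simps)
qed

lemma choose_mult_falling_le:
  assumes "r \<le> k" "2 * k \<le> N"
  shows "real ((N - 2 * r) choose (k - r)) * real (\<Prod>{N - 2 * r + 1..N})
           \<le> real (k choose r) * real (N choose k) * compatible_diff_factor N r"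
  using assms
proof (induction r arbitrary: N k)
  case 0
  then show ?case by simp
next
  case (Suc r)
  obtain k' where k: "k = Suc k'" using Suc.prems(1) by (cases k) auto
  define N' where "N' = N - 2"
  have N: "N = Suc (Suc N')" using Suc.prems k unfolding N'_def by simp
  have k': "r \<le> k'" "2 * k' \<le> N'" using Suc.prems k N by auto
  then have "2 * r \<le> N'" by simp
  define \<kappa> where "\<kappa> = compatible_diff_factor N' r"
  have "real ((N - 2 * Suc r) choose (k - Suc r)) * real (\<Prod>{N - 2 * Suc r + 1..N})
      = real ((N' - 2 * r) choose (k' - r)) * real (\<Prod>{N' - 2 * r + 1..N'}) * (real N * real (N - 1))"
    using k k' unfolding prod_falling_Suc[OF N \<open>2 * r \<le> N'\<close>] by (simp add: N algebra_simps)
  also have "\<dots> \<le> real (k' choose r) * real (N' choose k') * \<kappa> * (real N * real (N - 1))"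
    using Suc.IH[OF k'] by (simp add: \<kappa>_def mult_right_mono)
  also have "\<dots> = (real (k choose Suc r) * real (N choose k) * (real (Suc r) * real (N - k))) * \<kappa>"
    by (subst choose_Suc_Suc_identity[OF k N, symmetric]) (simp only: mult_ac)
  also have "\<dots> \<le> (real (k choose Suc r) * real (N choose k) * (real (Suc r) * (2 * real (N - r)))) * \<kappa>"
    using Suc.prems compatible_diff_factor_pos[of r N'] k'
    by (intro mult_right_mono mult_left_mono) (auto simp: \<kappa>_def)
  also have "\<dots> = real (k choose Suc r) * real (N choose k) * compatible_diff_factor N (Suc r)"
    by (simp add: N \<kappa>_def)
  finally show ?case .
qed

section \<open>The slice\<close>

lemma harmonic_imp_harmonic_on: "harmonic n c \<Longrightarrow> harmonic_on {..<n} c"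
proof (unfold harmonic_on_def, intro allI impI)
  fix T assume "harmonic n c" "T \<subseteq> {..<n}"
  then have "(\<Sum>i<n. mlpoly_deriv i c T) = 0" by (auto simp: harmonic_def)
  moreover have "(\<Sum>i<n. mlpoly_deriv i c T) = (\<Sum>i\<in>{..<n} - T. c (insert i T))"
    unfolding mlpoly_deriv_def by (simp add: sum.If_cases set_diff_eq Int_def)
  ultimately show "(\<Sum>i\<in>{..<n} - T. c (insert i T)) = 0" by simp
qed

lemma poly_on_slice_eq_ind_eval:
  assumes "R \<subseteq> {..<n}"
  shows "poly_on_slice n c R = ind_eval c R"
proof -
  have "(\<Prod>i\<in>S. if i \<in> R then 1 else 0) = (if S \<subseteq> R then 1 else (0::real))"
    if "S \<subseteq> {..<n}" for S
    using finite_subset[OF that] by (cases "S \<subseteq> R") (auto intro!: prod.neutral intro: prod_zero)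
  then have "poly_on_slice n c R = (\<Sum>S\<in>Pow {..<n}. if S \<subseteq> R then c S else 0)"
    unfolding poly_on_slice_def mlpoly_eval_def by (intro sum.cong) auto
  also have "\<dots> = (\<Sum>S\<in>{S \<in> Pow {..<n}. S \<subseteq> R}. c S)"
    by (rule sum.inter_filter[symmetric]) simp
  also have "{S \<in> Pow {..<n}. S \<subseteq> R} = Pow R" using assms by auto
  finally show ?thesis by (simp add: ind_eval_def)
qed

lemma slice_eq_ksubsets: "slice n k = ksubsets {..<n} k"
  by (simp add: slice_def ksubsets_def)

lemma pair_seqs_eq_pair_seqs_on: "pair_seqs n r = pair_seqs_on {..<n} r"
  by (simp add: pair_seqs_def pair_seqs_on_def)

lemma splits_pairs_conv_nth:
  "length xs = 2 * r \<Longrightarrow> splits_pairs xs R \<longleftrightarrow> (\<forall>i<r. card (R \<inter> {xs ! (2*i), xs ! (2*i+1)}) = 1)"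
proof (induction r arbitrary: xs)
  case (Suc r)
  then obtain a b ys where "xs = a # b # ys" "length ys = 2 * r"
    by (cases xs rule: remdups_adj.cases) auto
  with Suc.IH show ?case by (simp add: All_less_Suc2)
qed simp

lemma pair_seconds_conv_nth: "length xs = 2 * r \<Longrightarrow> pair_seconds xs = {xs ! (2*i+1) | i. i < r}"
proof (induction r arbitrary: xs)
  case (Suc r)
  then obtain a b ys where xs: "xs = a # b # ys" "length ys = 2 * r"
    by (cases xs rule: remdups_adj.cases) auto
  have "{xs ! (2*i+1) | i. i < Suc r} = insert b {ys ! (2*i+1) | i. i < r}"
    unfolding xs(1) setcompr_eq_image lessThan_def[symmetric] lessThan_Suc_eq_insert_0
    by (simp add: image_image)
  with Suc.IH xs show ?case by simp
qed simp

lemma card_pair_seqs: "2 * r \<le> n \<Longrightarrow> card (pair_seqs n r) = \<Prod>{n - 2 * r + 1..n}"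
  using card_lists_distinct_length_eq[of "{..<n}" "2 * r"] by (simp add: pair_seqs_def)

lemma card_pair_seqs_pos: "2 * r \<le> n \<Longrightarrow> real (card (pair_seqs n r)) > 0"
  by (simp add: card_pair_seqs) (rule prod_pos, simp)

lemma slice_norm_sq_hom_part:
  assumes "harmonic n c" "r \<le> k" "k \<le> n"
  shows "compatible_diff_factor n r * real (n choose k) * slice_norm_sq n k (poly_on_slice n (hom_part r c))
           = real ((n - 2 * r) choose (k - r)) * (\<Sum>xs\<in>pair_seqs n r. (iter_pair_diff c xs)\<^sup>2)"
proof -
  have "slice_norm_sq n k (poly_on_slice n (hom_part r c))
      = (\<Sum>R\<in>ksubsets {..<n} k. (hom_eval r c R)\<^sup>2) / real (n choose k)"
    unfolding slice_norm_sq_def slice_eq_ksubsets card_ksubsets[OF finite_lessThan] card_lessThan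
    by (intro arg_cong[where f = "\<lambda>x. x / _"] sum.cong refl)
       (auto simp: ksubsets_def poly_on_slice_eq_ind_eval ind_eval_hom_part finite_subset)
  moreover have "real (n choose k) > 0" using assms(3) by simp
  ultimately show ?thesis
    using sum_hom_eval_sq[OF finite_lessThan harmonic_imp_harmonic_on[OF assms(1)] assms(2)]
    by (simp add: pair_seqs_eq_pair_seqs_on)
qed

lemma compatible_sets_average:
  assumes "harmonic n c" "xs \<in> pair_seqs n r" "r \<le> k" "k + r \<le> n"
  shows "(\<Sum>R\<in>compatible_sets n k r xs. (-1) ^ card (R \<inter> {xs ! (2*i+1) | i. i < r}) * poly_on_slice n c R)
           / real (card (compatible_sets n k r xs)) = iter_pair_diff c xs / 2 ^ r"
proof -
  have xs: "xs \<in> pair_seqs_on {..<n} r" and len: "length xs = 2 * r"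
    using assms(2) by (simp_all add: pair_seqs_eq_pair_seqs_on pair_seqs_on_def)
  have sets: "compatible_sets n k r xs = compatible_on {..<n} k xs"
    by (simp add: compatible_sets_def compatible_on_def slice_eq_ksubsets splits_pairs_conv_nth[OF len])
  have "(\<Sum>R\<in>compatible_sets n k r xs. (-1) ^ card (R \<inter> {xs ! (2*i+1) | i. i < r}) * poly_on_slice n c R)
      = (\<Sum>R\<in>compatible_on {..<n} k xs. pair_sign xs R * ind_eval c R)"
    unfolding sets pair_sign_def pair_seconds_conv_nth[OF len]
    by (intro sum.cong refl) (auto simp: compatible_on_def ksubsets_def poly_on_slice_eq_ind_eval)
  also have "\<dots> = real ((n - 2 * r) choose (k - r)) * iter_pair_diff c xs"
    using sum_compatible_on_pair_sign[OF _ harmonic_imp_harmonic_on[OF assms(1)] xs assms(3)] by simp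
  moreover have "real ((n - 2 * r) choose (k - r)) > 0" using assms(4) by simp
  ultimately show ?thesis
    using card_compatible_on[OF _ xs assms(3)] by (simp add: sets)
qed

lemma level_weight_sq:
  assumes "harmonic n c" "r \<le> k" "k + r \<le> n"
  shows "4 ^ r * real (card (pair_seqs n r)) * (level_weight n k r (poly_on_slice n c))\<^sup>2
           = (\<Sum>xs\<in>pair_seqs n r. (iter_pair_diff c xs)\<^sup>2)"
proof -
  have four: "(4::real) ^ r = (2 ^ r)\<^sup>2" by (simp add: power2_eq_square flip: power_mult_distrib)
  have "(\<Sum>xs\<in>pair_seqs n r.
      ((\<Sum>R\<in>compatible_sets n k r xs. (-1) ^ card (R \<inter> {xs ! (2*i+1) | i. i < r}) * poly_on_slice n c R)
        / real (card (compatible_sets n k r xs)))\<^sup>2)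
      = (\<Sum>xs\<in>pair_seqs n r. (iter_pair_diff c xs / 2 ^ r)\<^sup>2)"
  proof (intro sum.cong refl)
    fix xs assume "xs \<in> pair_seqs n r"
    from compatible_sets_average[OF assms(1) this assms(2,3)]
    show "((\<Sum>R\<in>compatible_sets n k r xs. (-1) ^ card (R \<inter> {xs ! (2*i+1) | i. i < r}) * poly_on_slice n c R)
        / real (card (compatible_sets n k r xs)))\<^sup>2 = (iter_pair_diff c xs / 2 ^ r)\<^sup>2"
      by (rule arg_cong)
  qed
  also have "\<dots> = (\<Sum>xs\<in>pair_seqs n r. (iter_pair_diff c xs)\<^sup>2) / 4 ^ r"
    by (simp add: power_divide four sum_divide_distrib)
  finally show ?thesis
    using card_pair_seqs_pos[of r n] assms(2,3) by (simp add: level_weight_def sum_nonneg)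
qed

theorem lemma2p12:
  fixes n k r :: nat and c :: "nat set \<Rightarrow> real"
  assumes "2 * r \<le> 2 * k" and "2 * k \<le> n"
    and "harmonic n c"
  shows "slice_norm_sq n k (poly_on_slice n (hom_part r c))
           \<le> 4 ^ r * real (k choose r) * (level_weight n k r (poly_on_slice n c))\<^sup>2"
proof -
  have r: "r \<le> k" "k + r \<le> n" "k \<le> n" using assms(1,2) by auto
  define \<kappa> where "\<kappa> = compatible_diff_factor n r"
  define K where "K = real (n choose k)"
  define M where "M = real (card (pair_seqs n r))"
  define S where "S = (\<Sum>xs\<in>pair_seqs n r. (iter_pair_diff c xs)\<^sup>2)"
  have pos: "\<kappa> * K * M > 0"
    using compatible_diff_factor_pos[of r n] card_pair_seqs_pos[of r n] assms(2) r
    unfolding \<kappa>_def K_def M_def by simp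
  have "\<kappa> * K * M * slice_norm_sq n k (poly_on_slice n (hom_part r c)) = real ((n - 2 * r) choose (k - r)) * M * S"
    using slice_norm_sq_hom_part[OF assms(3) r(1,3)] by (simp add: \<kappa>_def K_def S_def mult_ac)
  also have "\<dots> \<le> (real (k choose r) * K * \<kappa>) * S"
    using choose_mult_falling_le[OF r(1) assms(2)] card_pair_seqs[of r n] assms(1,2)
    by (intro mult_right_mono) (simp_all add: M_def K_def \<kappa>_def S_def sum_nonneg)
  also have "\<dots> = \<kappa> * K * M * (4 ^ r * real (k choose r) * (level_weight n k r (poly_on_slice n c))\<^sup>2)"
    using level_weight_sq[OF assms(3) r(1,2)] by (simp add: M_def S_def algebra_simps)
  finally show ?thesis using pos by (simp add: mult_le_cancel_left_pos)
qed

end
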